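(* Let $X$ be a topologically complete space and $\mathcal A$ a family of closed, locally finite, normal covers of $X$ satisfying conditions (I) and (II), and let $\Lambda$, $\mathrm{cov}_\lambda$, $F_\lambda$, $F_\infty$, $\wedge$ be as in the context. Then: (1) for each open subset $U$ of $X$, each $x\in U$ and each positive integer $n$, there exists $\lambda\in\Lambda$ such that $\bigcup\mathrm{star}^n_{\mathrm{cov}_\lambda}(x)\subset U$; (2) for each $z\in F_\infty$, the set $\bigcap_{\lambda\in\Lambda}\wedge z(\lambda)$ consists of exactly one point.
   Context: A topologically complete space is a Tychonoff space complete with respect to its finest uniformity. A closed, locally finite, normal cover $\alpha$ of $X$ is a locally finite cover by closed sets admitting a partition of unity $\{\phi_{\alpha,V}:V\in\alpha\}$ with $\mathrm{cl}(\phi_{\alpha,V}^{-1}((0,1]))\subset\mathrm{int}(V)$, $\sum_V\phi_{\alpha,V}=1$. For a cover $\alpha$ and $S\subset X$: $\mathrm{star}_\alpha(S)=\{V\in\alpha:V\cap S\neq\emptyset\}$, $\mathrm{star}^1_\alpha=\mathrm{star}_\alpha$, $\mathrm{star}^{n+1}_\alpha(S)=\{V\in\alpha:\ V\cap W\neq\emptyset\text{ for some }W\in\mathrm{star}^n_\alpha(S)\}$; $\mathrm{star}_\alpha(x)=\mathrm{star}_\alpha(\{x\})$; $\bigcup$ of a collection is the union of its members. Conditions: (I) for each open $U\subset X$ and $x\in U$ there is $\alpha\in\mathcal A$ with $\bigcup\mathrm{star}_\alpha(x)\subset U$; (II) if $f(\alpha)\in\alpha$ is chosen for each $\alpha\in\mathcal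 A$ and $\{f(\alpha)\}$ has the finite intersection property, then $\bigcap_\alpha f(\alpha)\neq\emptyset$. Construction: $\Lambda$ is the set of finite subsets of $\mathcal A$ directed by inclusion. For $\lambda\in\Lambda$, $N^{(0)}_\lambda$ is the set of functions $v$ on $\lambda$ with $v(\alpha)\in\alpha$ for all $\alpha\in\lambda$ and $\wedge v:=\bigcap_{\alpha\in\lambda}v(\alpha)\neq\emptyset$ (empty intersection meaning $X$); $\mathrm{cov}_\lambda=\{\wedge v: v\in N^{(0)}_\lambda\}$. $F_\lambda$ is the simplicial complex (weak topology) with vertex set $N^{(0)}_\lambda$ in which a finite set $\{v_1,\dots,v_k\}$ spans a simplex iff $\wedge v_i\cap\wedge v_j\neq\emptyset$ for all $i,j$. For $\lambda\subset\mu$, $\pi^\mu_\lambda:F_\mu\to F_\lambda$ is the simplicial map sending each vertex $v$ to its restriction $v|_\lambda$. $F_\infty=\varprojlim(F_\lambda,\pi^\mu_\lambda;\Lambda)$ with projections $\pi_\lambda$, and $z(\lambda)=\pi_\lambda(z)$. For $a\in F_\lambda$, $\sigma_\lambda(a)$ denotes the unique simplex of $F_\lambda$ containing $a$ in its interior (all barycentric coordinates positive), and $\wedge a=\bigcap\{\wedge v: v\text{ a vertex of }\sigma_\lambda(a)\}$ (possibly empty). *)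

theory Defs
  imports "HOL-Analysis.Analysis"
begin

definition tychonoff_space :: "'a topology \<Rightarrow> bool" where
  "tychonoff_space T \<longleftrightarrow> completely_regular_space T \<and> t1_space T"

definition uniformity_on :: "'a set \<Rightarrow> ('a \<times> 'a) set set \<Rightarrow> bool" where
  "uniformity_on X U \<longleftrightarrow>
     U \<noteq> {} \<and>
     (\<forall>E\<in>U. E \<subseteq> X \<times> X \<and> Id_on X \<subseteq> E) \<and>
     (\<forall>E\<in>U. \<forall>D. E \<subseteq> D \<and> D \<subseteq> X \<times> X \<longrightarrow> D \<in> U) \<and>
     (\<forall>E\<in>U. \<forall>D\<in>U. E \<inter> D \<in> U) \<and>
     (\<forall>E\<in>U. E\<inverse> \<in> U) \<and>
     (\<forall>E\<in>U. \<exists>D\<in>U. D O D \<subseteq> E)"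

definition compatible_uniformity :: "'a topology \<Rightarrow> ('a \<times> 'a) set set \<Rightarrow> bool" where
  "compatible_uniformity T U \<longleftrightarrow>
     uniformity_on (topspace T) U \<and>
     (\<forall>S. openin T S \<longleftrightarrow> S \<subseteq> topspace T \<and> (\<forall>x\<in>S. \<exists>E\<in>U. E `` {x} \<subseteq> S))"

definition finest_uniformity :: "'a topology \<Rightarrow> ('a \<times> 'a) set set \<Rightarrow> bool" where
  "finest_uniformity T U \<longleftrightarrow>
     compatible_uniformity T U \<and> (\<forall>V. compatible_uniformity T V \<longrightarrow> V \<subseteq> U)"

definition set_filter_on :: "'a set \<Rightarrow> 'a set set \<Rightarrow> bool" where
  "set_filter_on X F \<longleftrightarrow>
     X \<in> F \<and> {} \<notin> F \<and> (\<forall>A\<in>F. A \<subseteq> X) \<and>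
     (\<forall>A\<in>F. \<forall>B\<in>F. A \<inter> B \<in> F) \<and>
     (\<forall>A\<in>F. \<forall>B. A \<subseteq> B \<and> B \<subseteq> X \<longrightarrow> B \<in> F)"

definition uniformly_complete :: "'a topology \<Rightarrow> ('a \<times> 'a) set set \<Rightarrow> bool" where
  "uniformly_complete T U \<longleftrightarrow>
     (\<forall>F. set_filter_on (topspace T) F \<and> (\<forall>E\<in>U. \<exists>A\<in>F. A \<times> A \<subseteq> E) \<longrightarrow>
        (\<exists>x\<in>topspace T. \<forall>S. openin T S \<and> x \<in> S \<longrightarrow> S \<in> F))"

definition topologically_complete :: "'a topology \<Rightarrow> bool" where
  "topologically_complete T \<longleftrightarrow>
     tychonoff_space T \<and> (\<exists>U. finest_uniformity T U \<and> uniformly_complete T U)"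

definition closed_lf_normal_cover :: "'a topology \<Rightarrow> 'a set set \<Rightarrow> bool" where
  "closed_lf_normal_cover T \<alpha> \<longleftrightarrow>
     \<Union>\<alpha> = topspace T \<and>
     (\<forall>V\<in>\<alpha>. closedin T V) \<and>
     (\<forall>x\<in>topspace T. \<exists>N. openin T N \<and> x \<in> N \<and> finite {V\<in>\<alpha>. V \<inter> N \<noteq> {}}) \<and>
     (\<exists>\<phi> :: 'a set \<Rightarrow> 'a \<Rightarrow> real.
        (\<forall>V\<in>\<alpha>. continuous_map T euclideanreal (\<phi> V)) \<and>
        (\<forall>V\<in>\<alpha>. \<forall>x\<in>topspace T. 0 \<le> \<phi> V x \<and> \<phi> V x \<le> 1) \<and>
        (\<forall>V\<in>\<alpha>. T closure_of {x\<in>topspace T. 0 < \<phi> V x} \<subseteq> T interior_of V) \<and>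
        (\<forall>x\<in>topspace T. (\<Sum>V\<in>{V\<in>\<alpha>. x \<in> V}. \<phi> V x) = 1))"

definition star :: "'a set set \<Rightarrow> 'a set \<Rightarrow> 'a set set" where
  "star c S = {V\<in>c. V \<inter> S \<noteq> {}}"

text \<open>star_aux c k S is star^(k+1)_c(S).\<close>
primrec star_aux :: "'a set set \<Rightarrow> nat \<Rightarrow> 'a set \<Rightarrow> 'a set set" where
  "star_aux c 0 S = star c S"
| "star_aux c (Suc k) S = {V\<in>c. \<exists>W\<in>star_aux c k S. V \<inter> W \<noteq> {}}"

text \<open>star_pow c n S = star^n_c(S), meaningful for n \<ge> 1.\<close>
definition star_pow :: "'a set set \<Rightarrow> nat \<Rightarrow> 'a set \<Rightarrow> 'a set set" where
  "star_pow c n S = star_aux c (n - 1) S"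

type_synonym 'a vertex = "'a set set \<Rightarrow> 'a set"

definition Lam :: "'a set set set \<Rightarrow> 'a set set set set" where
  "Lam A = {l. finite l \<and> l \<subseteq> A}"

definition wedge :: "'a set \<Rightarrow> 'a set set set \<Rightarrow> 'a vertex \<Rightarrow> 'a set" where
  "wedge X l v = {x\<in>X. \<forall>\<alpha>\<in>l. x \<in> v \<alpha>}"

definition N0 :: "'a set \<Rightarrow> 'a set set set \<Rightarrow> 'a vertex set" where
  "N0 X l = {v \<in> Pi\<^sub>E l (\<lambda>\<alpha>. \<alpha>). wedge X l v \<noteq> {}}"

definition cov :: "'a set \<Rightarrow> 'a set set set \<Rightarrow> 'a set set" where
  "cov X l = wedge X l ` N0 X l"

definition is_simplex :: "'a set \<Rightarrow> 'a set set set \<Rightarrow> 'a vertex set \<Rightarrow> bool" where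
  "is_simplex X l S \<longleftrightarrow> finite S \<and> S \<noteq> {} \<and> S \<subseteq> N0 X l \<and>
     (\<forall>v\<in>S. \<forall>w\<in>S. wedge X l v \<inter> wedge X l w \<noteq> {})"

text \<open>Points of the geometric realisation of F_lambda, as barycentric coordinates.\<close>
definition bsupp :: "('a vertex \<Rightarrow> real) \<Rightarrow> 'a vertex set" where
  "bsupp a = {v. a v \<noteq> 0}"

definition F_pt :: "'a set \<Rightarrow> 'a set set set \<Rightarrow> ('a vertex \<Rightarrow> real) \<Rightarrow> bool" where
  "F_pt X l a \<longleftrightarrow> (\<forall>v. 0 \<le> a v) \<and> is_simplex X l (bsupp a) \<and> (\<Sum>v\<in>bsupp a. a v) = 1"

text \<open>The vertices of sigma_lambda(a) are those with positive coordinate, i.e. bsupp a.\<close>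
definition wedge_pt :: "'a set \<Rightarrow> 'a set set set \<Rightarrow> ('a vertex \<Rightarrow> real) \<Rightarrow> 'a set" where
  "wedge_pt X l a = X \<inter> (\<Inter>v\<in>bsupp a. wedge X l v)"

text \<open>The affine extension of the simplicial map v \<mapsto> v restricted to l.\<close>
definition proj :: "'a set set set \<Rightarrow> ('a vertex \<Rightarrow> real) \<Rightarrow> ('a vertex \<Rightarrow> real)" where
  "proj l a = (\<lambda>w. \<Sum>v\<in>{v\<in>bsupp a. restrict v l = w}. a v)"

definition F_inf :: "'a set \<Rightarrow> 'a set set set \<Rightarrow> ('a set set set \<Rightarrow> 'a vertex \<Rightarrow> real) set" where
  "F_inf X A = {z. (\<forall>l\<in>Lam A. F_pt X l (z l)) \<and>
                   (\<forall>l\<in>Lam A. \<forall>m\<in>Lam A. l \<subseteq> m \<longrightarrow> proj l (z m) = z l)}"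

end

theory Submission
  imports Defs
begin

text \<open>
  Given \<open>x \<in> U\<close>, condition (I) gives
  \<open>\<alpha> \<in> \<A>\<close> with \<open>\<Union>star\<^sub>\<alpha>(x) \<subseteq> U\<close>, and since \<open>\<alpha>\<close> is a locally finite family of
  closed sets, some neighbourhood \<open>G\<close> of \<open>x\<close> meets only members of \<open>\<alpha>\<close> that
  contain \<open>x\<close>.  If \<open>\<Union>star\<^sup>n(x) \<subseteq> G\<close> for \<open>cov\<^sub>\<lambda>\<close>, then for
  \<open>\<mu> = \<lambda> \<union> {\<alpha>}\<close> every member of \<open>star\<^sup>n\<^sup>+\<^sup>1(x)\<close> lies in a member of \<open>\<alpha>\<close> meeting
  \<open>G\<close>, hence in \<open>\<Union>star\<^sub>\<alpha>(x) \<subseteq> U\<close>.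

  For (2), the vertex sets of the carriers \<open>\<sigma>(z(\<lambda>))\<close> form an inverse system of
  finite nonempty sets under restriction, so by compactness of a product of
  finite discrete spaces there is a thread \<open>f\<close>, i.e. a choice \<open>f(\<alpha>) \<in> \<alpha>\<close> with
  \<open>f|\<lambda>\<close> a vertex of \<open>\<sigma>(z(\<lambda>))\<close> for every \<open>\<lambda>\<close>.  The sets \<open>f(\<alpha>)\<close> have the finite
  intersection property, so (II) gives a point \<open>p\<close> in all of them.  Every vertex
  \<open>v\<close> of \<open>\<sigma>(z(\<lambda>))\<close> is the restriction of a vertex \<open>w\<close> of \<open>\<sigma>(z(\<mu>))\<close> for any
  \<open>\<mu> \<supseteq> \<lambda>\<close>; as \<open>\<and>w\<close> meets \<open>\<and>(f|\<mu>) \<ni> p\<close>, it lies in \<open>\<Union>star\<^sup>2(p)\<close>, which by (1)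
  avoids any closed \<open>v(\<alpha>) \<not>\<ni> p\<close> for large \<open>\<mu>\<close>.  Hence \<open>p \<in> \<and>z(\<lambda>)\<close>.
  Uniqueness follows from (I) and the T1 property.
\<close>

lemma topologically_complete_imp_t1_space:
  "topologically_complete T \<Longrightarrow> t1_space T"
  by (simp add: topologically_complete_def tychonoff_space_def)

lemma closed_lf_normal_cover_closedin:
  "closed_lf_normal_cover T \<alpha> \<Longrightarrow> V \<in> \<alpha> \<Longrightarrow> closedin T V"
  unfolding closed_lf_normal_cover_def by blast

lemma closed_lf_normal_cover_locally_finite:
  "closed_lf_normal_cover T \<alpha> \<Longrightarrow> locally_finite_in T \<alpha>"
  unfolding closed_lf_normal_cover_def locally_finite_in_def by blast

lemma locally_finite_closed_nbhd_meets_only_containing: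
  assumes "locally_finite_in T \<alpha>" "\<And>V. V \<in> \<alpha> \<Longrightarrow> closedin T V" "x \<in> topspace T"
  shows "\<exists>G. openin T G \<and> x \<in> G \<and> (\<forall>V\<in>\<alpha>. V \<inter> G \<noteq> {} \<longrightarrow> x \<in> V)"
proof -
  let ?B = "{V\<in>\<alpha>. x \<notin> V}"
  have "closedin T (\<Union>?B)"
    using assms(1,2) by (intro closedin_locally_finite_Union) (auto intro: locally_finite_in_subset)
  then show ?thesis
    using assms(3) by (intro exI[of _ "topspace T - \<Union>?B"]) auto
qed

lemma cov_member_subset:
  assumes "W \<in> cov X l" "\<alpha> \<in> l"
  shows "\<exists>V\<in>\<alpha>. W \<subseteq> V"
  using assms unfolding cov_def N0_def wedge_def by (auto simp: PiE_iff)

lemma cov_refines_cov: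
  assumes "l' \<subseteq> l" "W \<in> cov X l"
  shows "\<exists>W'\<in>cov X l'. W \<subseteq> W'"
proof -
  obtain v where v: "v \<in> N0 X l" "W = wedge X l v"
    using assms(2) unfolding cov_def by blast
  have sub: "wedge X l v \<subseteq> wedge X l' (restrict v l')"
    using assms(1) unfolding wedge_def by auto
  then have "restrict v l' \<in> N0 X l'"
    using v assms(1) unfolding N0_def by (auto simp: PiE_iff)
  then show ?thesis
    using sub v unfolding cov_def by blast
qed

lemma star_aux_refines:
  assumes "\<forall>W\<in>c. \<exists>W'\<in>c'. W \<subseteq> W'" "W \<in> star_aux c k S"
  shows "\<exists>W'\<in>star_aux c' k S. W \<subseteq> W'"
  using assms(2)
proof (induction k arbitrary: W)
  case 0
  then show ?case
    using assms(1) by (fastforce simp: star_def)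
next
  case (Suc k)
  then obtain W0 where W0: "W \<in> c" "W0 \<in> star_aux c k S" "W \<inter> W0 \<noteq> {}"
    by auto
  obtain W0' where W0': "W0' \<in> star_aux c' k S" "W0 \<subseteq> W0'"
    using Suc.IH[OF W0(2)] by blast
  obtain W' where W': "W' \<in> c'" "W \<subseteq> W'"
    using assms(1) W0(1) by blast
  have "W' \<inter> W0' \<noteq> {}"
    using W0(3) W0'(2) W'(2) by blast
  then have "W' \<in> star_aux c' (Suc k) S"
    using W'(1) W0'(1) by auto
  then show ?case
    using W'(2) by blast
qed

lemma Union_star_aux_cov_antimono:
  "l' \<subseteq> l \<Longrightarrow> \<Union>(star_aux (cov X l) k S) \<subseteq> \<Union>(star_aux (cov X l') k S)"
  using star_aux_refines[of "cov X l" "cov X l'"] cov_refines_cov by blast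

lemma Union_star_aux_cov_shrinks:
  assumes covers: "\<And>\<alpha>. \<alpha> \<in> A \<Longrightarrow> closed_lf_normal_cover T \<alpha>"
    and condI: "\<And>U x. openin T U \<Longrightarrow> x \<in> U \<Longrightarrow> \<exists>\<alpha>\<in>A. \<Union>(star \<alpha> {x}) \<subseteq> U"
    and "openin T U" "x \<in> U"
  shows "\<exists>l\<in>Lam A. \<Union>(star_aux (cov (topspace T) l) k {x}) \<subseteq> U"
  using assms(3,4)
proof (induction k arbitrary: U)
  case 0
  obtain \<alpha> where \<alpha>: "\<alpha> \<in> A" "\<Union>(star \<alpha> {x}) \<subseteq> U"
    using condI[OF 0] by fast
  have "W \<subseteq> U" if "W \<in> cov (topspace T) {\<alpha>}" "x \<in> W" for W
    using cov_member_subset[OF that(1), of \<alpha>] that(2) \<alpha>(2) by (auto simp: star_def)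
  moreover have "{\<alpha>} \<in> Lam A"
    using \<alpha>(1) by (simp add: Lam_def)
  ultimately show ?case
    by (intro bexI[of _ "{\<alpha>}"]) (auto simp: star_def)
next
  case (Suc k)
  obtain \<alpha> where \<alpha>: "\<alpha> \<in> A" "\<Union>(star \<alpha> {x}) \<subseteq> U"
    using condI[OF Suc.prems] by fast
  have cover: "closed_lf_normal_cover T \<alpha>"
    using covers \<alpha>(1) .
  have "x \<in> topspace T"
    using openin_subset[OF Suc.prems(1)] Suc.prems(2) by blast
  then obtain G where G: "openin T G" "x \<in> G" "\<forall>V\<in>\<alpha>. V \<inter> G \<noteq> {} \<longrightarrow> x \<in> V"
    using locally_finite_closed_nbhd_meets_only_containing[OF closed_lf_normal_cover_locally_finite[OF cover]
        closed_lf_normal_cover_closedin[OF cover]] by blast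
  obtain l' where l': "l' \<in> Lam A" "\<Union>(star_aux (cov (topspace T) l') k {x}) \<subseteq> G"
    using Suc.IH[OF G(1,2)] by fast
  define l where "l = insert \<alpha> l'"
  have "W \<subseteq> U" if W: "W \<in> cov (topspace T) l" "W0 \<in> star_aux (cov (topspace T) l) k {x}"
    "W \<inter> W0 \<noteq> {}" for W W0
  proof -
    have "W0 \<subseteq> G"
      using W(2) l'(2) Union_star_aux_cov_antimono[of l' l "topspace T" k "{x}"]
      unfolding l_def by blast
    moreover obtain V where V: "V \<in> \<alpha>" "W \<subseteq> V"
      using cov_member_subset[OF W(1), of \<alpha>] unfolding l_def by blast
    ultimately have "V \<in> star \<alpha> {x}"
      using G(3) W(3) unfolding star_def by blast
    then show ?thesis
      using V(2) \<alpha>(2) by blast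
  qed
  moreover have "l \<in> Lam A"
    using l'(1) \<alpha>(1) by (simp add: l_def Lam_def)
  ultimately show ?case
    by (intro bexI[of _ l]) auto
qed

lemma bsupp_proj:
  assumes "\<And>v. 0 \<le> a v" "finite (bsupp a)"
  shows "bsupp (proj l a) = (\<lambda>v. restrict v l) ` bsupp a"
proof (rule set_eqI)
  fix w
  let ?F = "{v\<in>bsupp a. restrict v l = w}"
  have "proj l a w \<noteq> 0 \<longleftrightarrow> ?F \<noteq> {}"
  proof
    assume "?F \<noteq> {}"
    moreover have "0 < a v" if "v \<in> ?F" for v
      using assms(1)[of v] that by (simp add: bsupp_def)
    ultimately have "0 < sum a ?F"
      using assms(2) by (intro sum_pos) auto
    then show "proj l a w \<noteq> 0"
      by (simp add: proj_def)
  next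
    assume "proj l a w \<noteq> 0"
    then show "?F \<noteq> {}"
      unfolding proj_def by (metis sum.empty)
  qed
  then show "w \<in> bsupp (proj l a) \<longleftrightarrow> w \<in> (\<lambda>v. restrict v l) ` bsupp a"
    by (auto simp: bsupp_def)
qed

lemma F_pt_bsupp:
  assumes "F_pt X l a"
  shows "finite (bsupp a)" "bsupp a \<noteq> {}" "bsupp a \<subseteq> N0 X l"
    and "\<And>v w. v \<in> bsupp a \<Longrightarrow> w \<in> bsupp a \<Longrightarrow> wedge X l v \<inter> wedge X l w \<noteq> {}"
  using assms unfolding F_pt_def is_simplex_def by auto

lemma F_inf_bsupp_restrict:
  assumes "z \<in> F_inf X A" "l \<in> Lam A" "m \<in> Lam A" "l \<subseteq> m"
  shows "bsupp (z l) = (\<lambda>v. restrict v l) ` bsupp (z m)"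
proof -
  have "F_pt X m (z m)" "proj l (z m) = z l"
    using assms unfolding F_inf_def by auto
  then show ?thesis
    using bsupp_proj[of "z m" l] F_pt_bsupp(1) unfolding F_pt_def by metis
qed

lemma openin_product_discrete_restrict:
  assumes "finite l" "l \<subseteq> I"
  shows "openin (product_topology (\<lambda>i. discrete_topology (C i)) I)
           {f \<in> topspace (product_topology (\<lambda>i. discrete_topology (C i)) I). restrict f l \<in> S}"
    (is "openin ?P ?U")
proof (subst openin_subopen, intro ballI)
  fix f
  assume f: "f \<in> ?U"
  let ?N = "(\<Inter>i\<in>l. {g \<in> topspace ?P. g i \<in> {f i}}) \<inter> topspace ?P"
  have "openin ?P {g \<in> topspace ?P. g i \<in> {f i}}" if "i \<in> l" for i
    using that assms f
    by (intro openin_continuous_map_preimage[OF continuous_map_product_projection]) auto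
  then have "openin ?P ?N"
    by (rule openin_INT[OF assms(1)])
  moreover have "?N \<subseteq> ?U"
  proof
    fix g
    assume g: "g \<in> ?N"
    then have "restrict g l = restrict f l"
      by (auto simp: fun_eq_iff)
    then show "g \<in> ?U"
      using f g by simp
  qed
  moreover have "f \<in> ?N"
    using f by blast
  ultimately show "\<exists>N. openin ?P N \<and> f \<in> N \<and> N \<subseteq> ?U"
    by blast
qed

lemma closedin_product_discrete_restrict:
  assumes "finite l" "l \<subseteq> I"
  shows "closedin (product_topology (\<lambda>i. discrete_topology (C i)) I)
           {f \<in> topspace (product_topology (\<lambda>i. discrete_topology (C i)) I). restrict f l \<in> S}"
proof -
  let ?P = "product_topology (\<lambda>i. discrete_topology (C i)) I"
  have "topspace ?P - {f \<in> topspace ?P. restrict f l \<in> S} = {f \<in> topspace ?P. restrict f l \<in> - S}"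
    by auto
  then show ?thesis
    using openin_product_discrete_restrict[OF assms, of C "- S"] by (simp add: closedin_def)
qed

lemma inverse_system_member_extends:
  fixes S :: "'i set \<Rightarrow> ('i \<Rightarrow> 'b) set"
  assumes ne: "\<And>l. finite l \<Longrightarrow> l \<subseteq> I \<Longrightarrow> S l \<noteq> {}"
    and restr: "\<And>l m v. finite m \<Longrightarrow> m \<subseteq> I \<Longrightarrow> l \<subseteq> m \<Longrightarrow> v \<in> S m \<Longrightarrow> restrict v l \<in> S l"
    and m: "finite m" "m \<subseteq> I"
  shows "\<exists>g\<in>(\<Pi>\<^sub>E i\<in>I. (\<lambda>v. v i) ` S {i}). \<forall>l. l \<subseteq> m \<longrightarrow> restrict g l \<in> S l"
proof -
  obtain v where v: "v \<in> S m"
    using ne[OF m] by blast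
  define g where
    "g i = (if i \<in> m then v i else if i \<in> I then (SOME c. c \<in> (\<lambda>v. v i) ` S {i}) else undefined)" for i
  have "v i \<in> (\<lambda>v. v i) ` S {i}" if "i \<in> m" for i
    using restr[OF m _ v, of "{i}"] that by (intro image_eqI[of _ _ "restrict v {i}"]) auto
  moreover have "S {i} \<noteq> {}" if "i \<in> I" for i
    using ne[of "{i}"] that by simp
  ultimately have "g \<in> (\<Pi>\<^sub>E i\<in>I. (\<lambda>v. v i) ` S {i})"
    using m(2) by (auto simp: g_def PiE_iff extensional_def some_in_eq)
  moreover have "restrict g l \<in> S l" if "l \<subseteq> m" for l
  proof -
    have "restrict g l = restrict v l"
      using that by (auto simp: g_def fun_eq_iff)
    then show ?thesis
      using restr[OF m that v] by simp
  qed
  ultimately show ?thesis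
    by blast
qed

lemma inverse_system_of_finite_sets_has_thread:
  fixes S :: "'i set \<Rightarrow> ('i \<Rightarrow> 'b) set"
  assumes fin: "\<And>i. i \<in> I \<Longrightarrow> finite (S {i})"
    and ne: "\<And>l. finite l \<Longrightarrow> l \<subseteq> I \<Longrightarrow> S l \<noteq> {}"
    and restr: "\<And>l m v. finite m \<Longrightarrow> m \<subseteq> I \<Longrightarrow> l \<subseteq> m \<Longrightarrow> v \<in> S m \<Longrightarrow> restrict v l \<in> S l"
  shows "\<exists>f. \<forall>l. finite l \<and> l \<subseteq> I \<longrightarrow> restrict f l \<in> S l"
proof -
  define P where "P = product_topology (\<lambda>i. discrete_topology ((\<lambda>v. v i) ` S {i})) I"
  define K where "K l = {f \<in> topspace P. restrict f l \<in> S l}" for l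
  define Fin where "Fin = {l. finite l \<and> l \<subseteq> I}"
  have "compact_space P"
    using fin by (auto simp: P_def compact_space_product_topology compact_space_discrete_topology)
  moreover have "closedin P (K l)" if "l \<in> Fin" for l
    using that unfolding P_def K_def Fin_def by (intro closedin_product_discrete_restrict) auto
  moreover have "\<Inter>\<F> \<noteq> {}" if \<F>: "finite \<F>" "\<F> \<subseteq> K ` Fin" for \<F>
  proof -
    obtain L where L: "L \<subseteq> Fin" "finite L" "\<F> = K ` L"
      using finite_subset_image[OF \<F>] by blast
    then have m: "finite (\<Union>L)" "\<Union>L \<subseteq> I"
      by (auto simp: Fin_def)
    have "\<exists>g\<in>(\<Pi>\<^sub>E i\<in>I. (\<lambda>v. v i) ` S {i}). \<forall>l. l \<subseteq> \<Union>L \<longrightarrow> restrict g l \<in> S l"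
      by (rule inverse_system_member_extends) (fact ne restr m)+
    then obtain g where g: "g \<in> (\<Pi>\<^sub>E i\<in>I. (\<lambda>v. v i) ` S {i})" "\<forall>l. l \<subseteq> \<Union>L \<longrightarrow> restrict g l \<in> S l"
      by (rule bexE)
    then have "g \<in> K l" if "l \<in> L" for l
      using that unfolding K_def P_def by auto
    then show ?thesis
      using L(3) by blast
  qed
  ultimately have "\<Inter>(K ` Fin) \<noteq> {}"
    unfolding compact_space_fip by blast
  then show ?thesis
    by (auto simp: K_def Fin_def)
qed

lemma F_inf_has_thread:
  assumes "z \<in> F_inf X A"
  shows "\<exists>f. \<forall>l\<in>Lam A. restrict f l \<in> bsupp (z l)"
proof -
  have F: "F_pt X l (z l)" if "l \<in> Lam A" for l
    using assms that unfolding F_inf_def by blast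
  have "\<exists>f. \<forall>l. finite l \<and> l \<subseteq> A \<longrightarrow> restrict f l \<in> bsupp (z l)"
  proof (rule inverse_system_of_finite_sets_has_thread)
    show "finite (bsupp (z {\<alpha>}))" if "\<alpha> \<in> A" for \<alpha>
      using F_pt_bsupp(1)[OF F] that by (simp add: Lam_def)
    show "bsupp (z l) \<noteq> {}" if "finite l" "l \<subseteq> A" for l
      using F_pt_bsupp(2)[OF F] that by (simp add: Lam_def)
    show "restrict v l \<in> bsupp (z l)" if "finite m" "m \<subseteq> A" "l \<subseteq> m" "v \<in> bsupp (z m)" for l m v
      using F_inf_bsupp_restrict[OF assms, of l m] that finite_subset[OF that(3,1)]
      by (auto simp: Lam_def)
  qed
  then show ?thesis
    by (simp add: Lam_def)
qed

lemma N0_thread_choice_fip: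
  assumes "\<And>l. l \<in> Lam A \<Longrightarrow> restrict f l \<in> N0 X l"
  shows "\<forall>\<alpha>\<in>A. f \<alpha> \<in> \<alpha>"
    and "\<forall>B. B \<subseteq> A \<and> finite B \<and> B \<noteq> {} \<longrightarrow> (\<Inter>\<alpha>\<in>B. f \<alpha>) \<noteq> {}"
proof -
  show "\<forall>\<alpha>\<in>A. f \<alpha> \<in> \<alpha>"
  proof
    fix \<alpha>
    assume "\<alpha> \<in> A"
    then have "restrict f {\<alpha>} \<in> N0 X {\<alpha>}"
      using assms by (simp add: Lam_def)
    then show "f \<alpha> \<in> \<alpha>"
      by (simp add: N0_def PiE_iff)
  qed
  show "\<forall>B. B \<subseteq> A \<and> finite B \<and> B \<noteq> {} \<longrightarrow> (\<Inter>\<alpha>\<in>B. f \<alpha>) \<noteq> {}"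
  proof (intro allI impI)
    fix B
    assume "B \<subseteq> A \<and> finite B \<and> B \<noteq> {}"
    then have "wedge X B (restrict f B) \<noteq> {}"
      using assms by (simp add: Lam_def N0_def)
    then obtain x where "\<forall>\<alpha>\<in>B. x \<in> f \<alpha>"
      by (auto simp: wedge_def)
    then show "(\<Inter>\<alpha>\<in>B. f \<alpha>) \<noteq> {}"
      by blast
  qed
qed

lemma vertex_wedge_in_star2:
  assumes "F_pt X m a" "u \<in> bsupp a" "p \<in> wedge X m u" "w \<in> bsupp a"
  shows "wedge X m w \<in> star_aux (cov X m) 1 {p}"
proof -
  have "wedge X m u \<in> star (cov X m) {p}" "wedge X m w \<in> cov X m"
    using assms F_pt_bsupp(3)[OF assms(1)] by (auto simp: star_def cov_def)
  moreover have "wedge X m w \<inter> wedge X m u \<noteq> {}"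
    using F_pt_bsupp(4)[OF assms(1,4,2)] .
  ultimately show ?thesis
    by auto
qed

lemma thread_point_in_wedge_pt:
  assumes closed: "\<And>\<alpha> V. \<alpha> \<in> A \<Longrightarrow> V \<in> \<alpha> \<Longrightarrow> closedin T V"
    and shrink: "\<And>U x. openin T U \<Longrightarrow> x \<in> U \<Longrightarrow>
                   \<exists>l\<in>Lam A. \<Union>(star_aux (cov (topspace T) l) 1 {x}) \<subseteq> U"
    and z: "z \<in> F_inf (topspace T) A"
    and thread: "\<And>l. l \<in> Lam A \<Longrightarrow> restrict f l \<in> bsupp (z l)"
    and p: "p \<in> topspace T" "\<And>\<alpha>. \<alpha> \<in> A \<Longrightarrow> p \<in> f \<alpha>"
    and l: "l \<in> Lam A"
  shows "p \<in> wedge_pt (topspace T) l (z l)"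
proof -
  let ?X = "topspace T"
  have F: "F_pt ?X m (z m)" if "m \<in> Lam A" for m
    using z that unfolding F_inf_def by blast
  have "p \<in> v \<alpha>" if v: "v \<in> bsupp (z l)" and \<alpha>: "\<alpha> \<in> l" for v \<alpha>
  proof (rule ccontr)
    assume "p \<notin> v \<alpha>"
    have "v \<alpha> \<in> \<alpha>" "\<alpha> \<in> A"
      using F_pt_bsupp(3)[OF F[OF l]] v \<alpha> l by (auto simp: N0_def Lam_def)
    then have "openin T (?X - v \<alpha>)"
      using closed by (simp add: closedin_def)
    then obtain l0 where l0: "l0 \<in> Lam A" "\<Union>(star_aux (cov ?X l0) 1 {p}) \<subseteq> ?X - v \<alpha>"
      using shrink p(1) \<open>p \<notin> v \<alpha>\<close> by fast
    define m where "m = l0 \<union> l"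
    have m: "m \<in> Lam A" "l0 \<subseteq> m" "l \<subseteq> m"
      using l0(1) l by (auto simp: m_def Lam_def)
    obtain w where w: "w \<in> bsupp (z m)" "v = restrict w l"
      using F_inf_bsupp_restrict[OF z l m(1,3)] v by blast
    have "p \<in> wedge ?X m (restrict f m)"
      using p m(1) by (auto simp: wedge_def Lam_def)
    then have "wedge ?X m w \<in> star_aux (cov ?X m) 1 {p}"
      using vertex_wedge_in_star2[OF F[OF m(1)] thread[OF m(1)] _ w(1)] by blast
    then have "wedge ?X m w \<subseteq> ?X - v \<alpha>"
      using Union_star_aux_cov_antimono[OF m(2)] l0(2) by blast
    moreover have "wedge ?X m w \<noteq> {}" "wedge ?X m w \<subseteq> v \<alpha>"
      using F_pt_bsupp(3)[OF F[OF m(1)]] w \<alpha> m(3) by (auto simp: N0_def wedge_def)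
    ultimately show False
      by blast
  qed
  then show ?thesis
    using p(1) by (auto simp: wedge_pt_def wedge_def)
qed

lemma Inter_wedge_pt_at_most_one:
  assumes t1: "t1_space T"
    and condI: "\<And>U x. openin T U \<Longrightarrow> x \<in> U \<Longrightarrow> \<exists>\<alpha>\<in>A. \<Union>(star \<alpha> {x}) \<subseteq> U"
    and F: "\<And>l. l \<in> Lam A \<Longrightarrow> F_pt (topspace T) l (z l)"
    and p: "p \<in> (\<Inter>l\<in>Lam A. wedge_pt (topspace T) l (z l))"
    and q: "q \<in> (\<Inter>l\<in>Lam A. wedge_pt (topspace T) l (z l))"
  shows "p = q"
proof (rule ccontr)
  assume "p \<noteq> q"
  have pq: "p \<in> wedge_pt (topspace T) l (z l)" "q \<in> wedge_pt (topspace T) l (z l)"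
    if "l \<in> Lam A" for l
    using p q that by blast+
  have "{} \<in> Lam A"
    by (simp add: Lam_def)
  then have "p \<in> topspace T" "q \<in> topspace T"
    using pq by (auto simp: wedge_pt_def)
  then obtain U where U: "openin T U" "p \<in> U" "q \<notin> U"
    using t1 \<open>p \<noteq> q\<close> unfolding t1_space_def by blast
  then obtain \<alpha> where \<alpha>: "\<alpha> \<in> A" "\<Union>(star \<alpha> {p}) \<subseteq> U"
    using condI by fast
  then have L: "{\<alpha>} \<in> Lam A"
    by (simp add: Lam_def)
  then obtain v where v: "v \<in> bsupp (z {\<alpha>})"
    using F_pt_bsupp(2)[OF F] by blast
  then have "v \<alpha> \<in> \<alpha>"
    using F_pt_bsupp(3)[OF F[OF L]] by (auto simp: N0_def)
  moreover have "p \<in> v \<alpha>" "q \<in> v \<alpha>"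
    using pq[OF L] v by (auto simp: wedge_pt_def wedge_def)
  ultimately show False
    using \<alpha>(2) U(3) by (auto simp: star_def)
qed

lemma F_inf_Inter_wedge_pt_ex1:
  assumes t1: "t1_space T"
    and closed: "\<And>\<alpha> V. \<alpha> \<in> A \<Longrightarrow> V \<in> \<alpha> \<Longrightarrow> closedin T V"
    and condI: "\<And>U x. openin T U \<Longrightarrow> x \<in> U \<Longrightarrow> \<exists>\<alpha>\<in>A. \<Union>(star \<alpha> {x}) \<subseteq> U"
    and condII: "\<And>f. (\<forall>\<alpha>\<in>A. f \<alpha> \<in> \<alpha>) \<Longrightarrow>
                   (\<forall>B. B \<subseteq> A \<and> finite B \<and> B \<noteq> {} \<longrightarrow> (\<Inter>\<alpha>\<in>B. f \<alpha>) \<noteq> {}) \<Longrightarrow>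
                   \<exists>x\<in>topspace T. \<forall>\<alpha>\<in>A. x \<in> f \<alpha>"
    and shrink: "\<And>U x. openin T U \<Longrightarrow> x \<in> U \<Longrightarrow>
                   \<exists>l\<in>Lam A. \<Union>(star_aux (cov (topspace T) l) 1 {x}) \<subseteq> U"
    and z: "z \<in> F_inf (topspace T) A"
  shows "\<exists>!p. p \<in> (\<Inter>l\<in>Lam A. wedge_pt (topspace T) l (z l))"
proof -
  have F: "F_pt (topspace T) l (z l)" if "l \<in> Lam A" for l
    using z that unfolding F_inf_def by blast
  obtain f where f: "\<And>l. l \<in> Lam A \<Longrightarrow> restrict f l \<in> bsupp (z l)"
    using F_inf_has_thread[OF z] by fast
  then have "\<And>l. l \<in> Lam A \<Longrightarrow> restrict f l \<in> N0 (topspace T) l"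
    using F_pt_bsupp(3)[OF F] by blast
  then obtain p where p: "p \<in> topspace T" "\<And>\<alpha>. \<alpha> \<in> A \<Longrightarrow> p \<in> f \<alpha>"
    using condII[OF N0_thread_choice_fip] by fast
  have p_in: "p \<in> wedge_pt (topspace T) l (z l)" if "l \<in> Lam A" for l
    using thread_point_in_wedge_pt[OF closed shrink z f p that] .
  moreover have "q = p" if "q \<in> (\<Inter>l\<in>Lam A. wedge_pt (topspace T) l (z l))" for q
    using Inter_wedge_pt_at_most_one[OF t1 condI F that] p_in by blast
  ultimately show ?thesis
    by (intro ex1I[of _ p]) auto
qed

theorem lemma2p2:
  fixes T :: "'a topology" and A :: "'a set set set"
  assumes tc: "topologically_complete T"
    and covers: "\<forall>\<alpha>\<in>A. closed_lf_normal_cover T \<alpha>"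
    and condI: "\<forall>U x. openin T U \<and> x \<in> U \<longrightarrow> (\<exists>\<alpha>\<in>A. \<Union>(star \<alpha> {x}) \<subseteq> U)"
    and condII: "\<forall>f. (\<forall>\<alpha>\<in>A. f \<alpha> \<in> \<alpha>) \<and>
                     (\<forall>B. B \<subseteq> A \<and> finite B \<and> B \<noteq> {} \<longrightarrow> (\<Inter>\<alpha>\<in>B. f \<alpha>) \<noteq> {})
                   \<longrightarrow> (\<exists>x\<in>topspace T. \<forall>\<alpha>\<in>A. x \<in> f \<alpha>)"
  shows "(\<forall>U x n. openin T U \<and> x \<in> U \<and> 0 < n \<longrightarrow>
            (\<exists>l\<in>Lam A. \<Union>(star_pow (cov (topspace T) l) n {x}) \<subseteq> U))
       \<and> (\<forall>z\<in>F_inf (topspace T) A.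
            \<exists>!p. p \<in> (\<Inter>l\<in>Lam A. wedge_pt (topspace T) l (z l)))"
proof -
  have condI': "\<exists>\<alpha>\<in>A. \<Union>(star \<alpha> {x}) \<subseteq> U" if "openin T U" "x \<in> U" for U x
    using condI that by simp
  have shrink: "\<exists>l\<in>Lam A. \<Union>(star_aux (cov (topspace T) l) k {x}) \<subseteq> U"
    if "openin T U" "x \<in> U" for U x k
    using Union_star_aux_cov_shrinks[OF covers[rule_format] condI' that] .
  have closed: "closedin T V" if "\<alpha> \<in> A" "V \<in> \<alpha>" for \<alpha> V
    using closed_lf_normal_cover_closedin[OF covers[rule_format, OF that(1)] that(2)] .
  have condII': "\<exists>x\<in>topspace T. \<forall>\<alpha>\<in>A. x \<in> f \<alpha>"
    if "\<forall>\<alpha>\<in>A. f \<alpha> \<in> \<alpha>" "\<forall>B. B \<subseteq> A \<and> finite B \<and> B \<noteq> {} \<longrightarrow> (\<Inter>\<alpha>\<in>B. f \<alpha>) \<noteq> {}"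
    for f
    using condII that by simp
  show ?thesis
  proof (intro conjI allI impI ballI)
    fix U x and n :: nat
    assume "openin T U \<and> x \<in> U \<and> 0 < n"
    then show "\<exists>l\<in>Lam A. \<Union>(star_pow (cov (topspace T) l) n {x}) \<subseteq> U"
      unfolding star_pow_def using shrink by simp
  next
    fix z
    assume "z \<in> F_inf (topspace T) A"
    show "\<exists>!p. p \<in> (\<Inter>l\<in>Lam A. wedge_pt (topspace T) l (z l))"
      by (rule F_inf_Inter_wedge_pt_ex1[OF topologically_complete_imp_t1_space[OF tc]])
        (fact closed condI' condII' shrink \<open>z \<in> F_inf (topspace T) A\<close>)+
  qed
qed

end
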